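(* Let $\mathcal F=(\{U_n\},\{V_n\})$ be a frame and $\mathbb{P}$, $\Omega$ as in the context. For $\omega\in\Omega$ define the sequence of finite sets $(L^\omega_k)_{k\ge1}$ by concatenating, for $i=1,2,3,\dots$ in order, $U_{\omega_i}$ copies of $I_1$ followed by $V_{\omega_i}$ copies of $I_{2^d}$. Then for $\mathbb{P}$-almost every $\omega$ and every $t\ge0$, $$\liminf_{n\to\infty}\frac1n\log\sum_{w\in\prod_{k=1}^nL^\omega_k}2^{-nt}\le -t\log2.$$
   Context: $d\ge1$; $I_1=\{(0,\dots,0)\}\subset\{0,1\}^d$ and $I_{2^d}=\{0,1\}^d$. A frame is a pair $\mathcal F=(\{U_n\}_{n\in\mathbb{N}},\{V_n\}_{n\in\mathbb{N}})$ of sequences of positive integers with $U_1\ge1$ and, for all $n\in\mathbb{N}$, $nU_n\le V_n$ and $(U_n+V_n)^3\le U_{n+1}$. $\Omega=\mathbb{N}^{\mathbb{N}}$ carries the Bernoulli measure $\mathbb{P}$ with $\mathbb{P}([\omega_1\dots\omega_n])=p_{\omega_1}\cdots p_{\omega_n}$, where $p_n=\frac{1}{Cn^2}$, $C=\sum_{n\ge1}n^{-2}$. *)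

theory Defs
  imports "HOL-Probability.Probability"
begin

definition cube :: "nat \<Rightarrow> nat list set" where
  "cube d = {xs. length xs = d \<and> set xs \<subseteq> {0,1}}"

definition I_one :: "nat \<Rightarrow> nat list set" where
  "I_one d = {replicate d 0}"

definition I_full :: "nat \<Rightarrow> nat list set" where
  "I_full d = cube d"

text \<open>Frames: sequences indexed by n \<ge> 1 (values at index 0 are irrelevant).\<close>

definition is_frame :: "(nat \<Rightarrow> nat) \<Rightarrow> (nat \<Rightarrow> nat) \<Rightarrow> bool" where
  "is_frame U V \<longleftrightarrow> U 1 \<ge> 1 \<and>
     (\<forall>n\<ge>1. U n \<ge> 1 \<and> V n \<ge> 1 \<and> n * U n \<le> V n \<and> (U n + V n) ^ 3 \<le> U (n + 1))"

definition Cconst :: real where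
  "Cconst = (\<Sum>n. 1 / (real (Suc n))^2)"

definition pw :: "nat \<Rightarrow> real" where
  "pw n = (if n = 0 then 0 else 1 / (Cconst * (real n)^2))"

text \<open>Bernoulli measure on \<Omega> = \<nat>^\<nat>; omega i (i = 0,1,...) is the paper's \<omega>_{i+1}.\<close>

definition Pmeas :: "(nat \<Rightarrow> nat) measure" where
  "Pmeas = PiM UNIV (\<lambda>_. density (count_space UNIV) (\<lambda>n. ennreal (pw n)))"

definition blk_start :: "(nat \<Rightarrow> nat) \<Rightarrow> (nat \<Rightarrow> nat) \<Rightarrow> (nat \<Rightarrow> nat) \<Rightarrow> nat \<Rightarrow> nat" where
  "blk_start U V \<omega> i = (\<Sum>j<i. U (\<omega> j) + V (\<omega> j))"

definition blk_index :: "(nat \<Rightarrow> nat) \<Rightarrow> (nat \<Rightarrow> nat) \<Rightarrow> (nat \<Rightarrow> nat) \<Rightarrow> nat \<Rightarrow> nat" where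
  "blk_index U V \<omega> k = (LEAST i. k < blk_start U V \<omega> (Suc i))"

text \<open>L U V d \<omega> k is the paper's L^\<omega>_{k+1}: within block i, the first U_{\<omega>_i}
  positions carry I_1, the next V_{\<omega>_i} positions carry I_{2^d}.\<close>

definition Lseq :: "(nat \<Rightarrow> nat) \<Rightarrow> (nat \<Rightarrow> nat) \<Rightarrow> nat \<Rightarrow> (nat \<Rightarrow> nat) \<Rightarrow> nat \<Rightarrow> nat list set" where
  "Lseq U V d \<omega> k =
     (let i = blk_index U V \<omega> k in
      if k - blk_start U V \<omega> i < U (\<omega> i) then I_one d else I_full d)"

definition words :: "(nat \<Rightarrow> nat) \<Rightarrow> (nat \<Rightarrow> nat) \<Rightarrow> nat \<Rightarrow> (nat \<Rightarrow> nat) \<Rightarrow> nat \<Rightarrow> nat list list set" where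
  "words U V d \<omega> n = {w. length w = n \<and> (\<forall>k<n. w ! k \<in> Lseq U V d \<omega> k)}"

end

(* Call i a large record of \<omega> (for a parameter r) if \<omega>_i exceeds every earlier \<omega>_j and
   ((r+1) i)^3 < U_{\<omega>_i}^2.  Since (U_n + V_n)^3 \<le> U_{n+1}, every block before a record is at
   most U_{\<omega>_i}^{1/3} long, so the blocks before block i have total length S < U_{\<omega>_i}/(r+1).
   The prefix of length n = S + U_{\<omega>_i} ends in a run of copies of I_1, hence carries at most
   2^{dS} \<le> 2^{dn/(r+1)} words, and there the normalised logarithm is at most
   d log 2/(r+1) - t log 2.  Letting r grow gives the liminf bound.

   Large records occur beyond every N almost surely.  The first index at which \<omega> reaches m is
   a record; as P(\<omega>_i \<ge> m) \<ge> p_m = 1/(C m^2), it falls into the window [N, K m^2) with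
   probability close to 1 for large K and m, and since U_m \<ge> (m-1)^6 every index of that
   window is large. *)

theory Submission
  imports Defs
begin

section \<open>The measure \<open>Pmeas\<close>\<close>

definition pw_measure :: "nat measure" where
  "pw_measure = density (count_space UNIV) (\<lambda>n. ennreal (pw n))"

lemma summable_inverse_Suc_squared: "summable (\<lambda>n. 1 / (real (Suc n))^2)"
proof -
  have "summable (\<lambda>n. inverse (real n ^ 2))"
    by (rule inverse_power_summable) simp
  then show ?thesis
    by (subst (asm) summable_Suc_iff[symmetric]) (simp add: inverse_eq_divide)
qed

lemma Cconst_pos: "Cconst > 0"
  unfolding Cconst_def by (rule suminf_pos[OF summable_inverse_Suc_squared]) simp

lemma pw_nonneg: "pw n \<ge> 0"
  using Cconst_pos by (simp add: pw_def)

lemma pw_sums: "pw sums 1"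
proof -
  have "(\<lambda>n. 1 / Cconst * (1 / (real (Suc n))^2)) sums (1 / Cconst * Cconst)"
    using sums_mult[OF summable_inverse_Suc_squared[THEN summable_sums]]
    unfolding Cconst_def[symmetric] .
  then have "(\<lambda>n. pw (Suc n)) sums 1"
    using Cconst_pos by (simp add: pw_def)
  then show ?thesis
    by (subst (asm) sums_Suc_iff) (simp add: pw_def)
qed

lemma sets_pw_measure [simp]: "sets pw_measure = UNIV"
  and space_pw_measure [simp]: "space pw_measure = UNIV"
  by (simp_all add: pw_measure_def)

lemma emeasure_pw_measure: "emeasure pw_measure A = (\<Sum>n. ennreal (pw n * indicator A n))"
  unfolding pw_measure_def
  by (simp add: emeasure_density nn_integral_count_space_nat ennreal_mult' ennreal_indicator pw_nonneg)

lemma prob_space_pw_measure: "prob_space pw_measure"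
proof
  have "emeasure pw_measure (space pw_measure) = (\<Sum>n. ennreal (pw n))"
    by (simp add: emeasure_pw_measure)
  also have "\<dots> = 1"
    using pw_sums by (simp add: suminf_ennreal2 pw_nonneg sums_summable sums_unique[symmetric])
  finally show "emeasure pw_measure (space pw_measure) = 1" .
qed

interpretation pw: prob_space pw_measure
  by (rule prob_space_pw_measure)

lemma measure_pw_measure_singleton: "measure pw_measure {m} = pw m"
proof -
  have "(\<Sum>n. ennreal (pw n * indicator {m} n)) = (\<Sum>n\<in>{m}. ennreal (pw n * indicator {m} n))"
    by (rule suminf_finite) auto
  then have "emeasure pw_measure {m} = pw m"
    by (simp add: emeasure_pw_measure)
  then show ?thesis
    by (simp add: pw.emeasure_eq_measure pw_nonneg)
qed

lemma measure_pw_measure_atLeast_ge: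
  assumes "1 \<le> m"
  shows "1 / (Cconst * real m ^ 2) \<le> measure pw_measure {m..}"
  using pw.finite_measure_mono[of "{m}" "{m..}"] assms
  by (simp add: measure_pw_measure_singleton pw_def)

lemma measure_atLeast_tendsto_0:
  fixes M :: "nat measure"
  assumes "finite_measure M" "sets M = UNIV"
  shows "(\<lambda>m. measure M {m..}) \<longlonglongrightarrow> 0"
proof -
  interpret finite_measure M by (rule assms)
  have "(\<lambda>m. measure M {m..}) \<longlonglongrightarrow> measure M (\<Inter>m. {m..})"
    using assms(2) by (intro finite_Lim_measure_decseq) (auto simp: decseq_def)
  moreover have "(\<Inter>m. {m..}) = ({} :: nat set)"
    using Suc_n_not_le_n by blast
  ultimately show ?thesis by simp
qed

lemma Pmeas_eq_PiM: "Pmeas = PiM UNIV (\<lambda>_::nat. pw_measure)"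
  by (simp add: Pmeas_def pw_measure_def)

interpretation pw_product: product_prob_space "\<lambda>_::nat. pw_measure" UNIV
  by (rule product_prob_spaceI) (rule prob_space_pw_measure)

interpretation Pmeas: prob_space Pmeas
  unfolding Pmeas_eq_PiM by (rule pw_product.P.prob_space_axioms)

lemma space_Pmeas [simp]: "space Pmeas = UNIV"
  by (simp add: Pmeas_eq_PiM space_PiM)

lemma AE_Pmeas_pos: "AE \<omega> in Pmeas. \<forall>j. 1 \<le> \<omega> j"
proof -
  have "{0} \<in> null_sets pw_measure"
    using measure_pw_measure_singleton[of 0] by (simp add: null_sets_def pw.emeasure_eq_measure pw_def)
  then have "AE n in pw_measure. n \<noteq> 0"
    by (rule AE_I') auto
  then have "AE n in pw_measure. 1 \<le> n"
    by (rule AE_mp) auto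
  then show ?thesis
    unfolding Pmeas_eq_PiM AE_all_countable by (intro allI pw_product.AE_component) auto
qed

text \<open>Stated with \<open>count_space\<close> as target, so that the measurability prover accepts
  arbitrary functions of a coordinate.\<close>

lemma measurable_component_pw_measure [measurable]:
  "(\<lambda>\<omega>. \<omega> j) \<in> measurable (PiM UNIV (\<lambda>_::nat. pw_measure)) (count_space UNIV)"
proof -
  have "(\<lambda>\<omega>. \<omega> j) \<in> measurable (PiM UNIV (\<lambda>_::nat. pw_measure)) pw_measure"
    by (rule measurable_component_singleton) simp
  moreover have "measurable (PiM UNIV (\<lambda>_::nat. pw_measure)) pw_measure =
                 measurable (PiM UNIV (\<lambda>_::nat. pw_measure)) (count_space UNIV)"
    by (rule measurable_cong_sets) simp_all
  ultimately show ?thesis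
    by simp
qed

lemma measure_PiM_first_hit_between:
  fixes M :: "'a measure"
  assumes "prob_space M" "A \<in> sets M" "N \<le> T"
  defines "\<Omega> \<equiv> PiM UNIV (\<lambda>_::nat. M)"
  shows "measure \<Omega> {\<omega>\<in>space \<Omega>. \<exists>i. N \<le> i \<and> i < T \<and> \<omega> i \<in> A \<and> (\<forall>j<i. \<omega> j \<notin> A)}
         = (1 - measure M A) ^ N - (1 - measure M A) ^ T"
proof -
  interpret M: prob_space M by (rule assms)
  interpret product_prob_space "\<lambda>_::nat. M" UNIV
    by (rule product_prob_spaceI) (rule assms)
  define avoid where "avoid K = {\<omega>\<in>space \<Omega>. \<forall>j\<in>{..<K}. \<omega> j \<in> space M - A}" for K
  have measure_avoid: "measure \<Omega> (avoid K) = (1 - measure M A) ^ K" for K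
  proof -
    have "emeasure \<Omega> (avoid K) = (\<Prod>j<K. emeasure M (space M - A))"
      unfolding avoid_def \<Omega>_def using assms(2) by (intro emeasure_PiM_Collect) auto
    then show ?thesis
      using assms(2) by (simp add: P.emeasure_eq_measure M.emeasure_eq_measure M.prob_compl
          \<Omega>_def prod_ennreal ennreal_power)
  qed
  have "{\<omega>\<in>space \<Omega>. \<exists>i. N \<le> i \<and> i < T \<and> \<omega> i \<in> A \<and> (\<forall>j<i. \<omega> j \<notin> A)} = avoid N - avoid T"
  proof -
    have "(\<exists>i. N \<le> i \<and> i < T \<and> \<omega> i \<in> A \<and> (\<forall>j<i. \<omega> j \<notin> A)) \<longleftrightarrow>
          (\<forall>j<N. \<omega> j \<notin> A) \<and> \<not> (\<forall>j<T. \<omega> j \<notin> A)" for \<omega>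
    proof
      assume "(\<forall>j<N. \<omega> j \<notin> A) \<and> \<not> (\<forall>j<T. \<omega> j \<notin> A)"
      then show "\<exists>i. N \<le> i \<and> i < T \<and> \<omega> i \<in> A \<and> (\<forall>j<i. \<omega> j \<notin> A)"
        using exists_least_iff[of "\<lambda>j. j < T \<and> \<omega> j \<in> A"] by (metis less_trans not_le)
    qed (use assms(3) in auto)
    then show ?thesis
      by (auto simp: avoid_def \<Omega>_def space_PiM)
  qed
  moreover have "avoid T \<subseteq> avoid N" "avoid N \<in> sets \<Omega>" "avoid T \<in> sets \<Omega>"
    using assms(2,3) unfolding avoid_def \<Omega>_def by auto
  ultimately show ?thesis
    using P.finite_measure_Diff[of "avoid N" "avoid T"] by (simp add: measure_avoid[unfolded \<Omega>_def] \<Omega>_def)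
qed

lemma sum_power_le_card_power_mult:
  fixes f :: "'a \<Rightarrow> nat"
  assumes "finite A" "0 < p" "\<And>x. x \<in> A \<Longrightarrow> f x ^ p \<le> Y"
  shows "(\<Sum>x\<in>A. f x) ^ p \<le> card A ^ p * Y"
proof (cases "A = {}")
  case False
  define M where "M = Max (f ` A)"
  have "M \<in> f ` A"
    unfolding M_def using assms(1) False by (intro Max_in) auto
  then have "M ^ p \<le> Y"
    using assms(3) by auto
  have "(\<Sum>x\<in>A. f x) \<le> card A * M"
    using sum_bounded_above[of A f M] assms(1) by (simp add: M_def)
  then have "(\<Sum>x\<in>A. f x) ^ p \<le> card A ^ p * M ^ p"
    by (metis power_mono power_mult_distrib zero_le)
  also have "\<dots> \<le> card A ^ p * Y"
    using \<open>M ^ p \<le> Y\<close> by simp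
  finally show ?thesis .
qed (use assms(2) in simp)

lemma ln_sum_const_div_le:
  fixes W :: "'a set" and t :: real
  assumes "0 < card W" "card W \<le> 2 ^ (d * S)" "Suc r * S \<le> n" "0 < n"
  shows "ln (\<Sum>w\<in>W. 2 powr (- real n * t)) / real n \<le> real d * ln 2 / real (Suc r) - t * ln 2"
proof -
  have "ln (\<Sum>w\<in>W. 2 powr (- real n * t)) = ln (real (card W)) - real n * t * ln 2"
    using assms(1) by (simp add: ln_mult ln_powr)
  also have "ln (real (card W)) \<le> ln (2 ^ (d * S))"
    using assms(1,2) by (subst ln_le_cancel_iff) (auto simp flip: of_nat_le_iff)
  also have "ln (2 ^ (d * S)) = real d * real S * ln 2"
    by (simp add: ln_realpow)
  also have "real d * real S \<le> real d * (real n / real (Suc r))"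
    using assms(3) by (intro mult_left_mono) (simp_all add: field_simps flip: of_nat_mult)
  finally have "ln (\<Sum>w\<in>W. 2 powr (- real n * t)) \<le> real n * (real d * ln 2 / real (Suc r) - t * ln 2)"
    by (simp add: algebra_simps)
  then show ?thesis
    using assms(4) by (simp add: divide_le_eq mult.commute)
qed

lemma liminf_le_if_frequently_le:
  fixes f :: "nat \<Rightarrow> real"
  assumes "\<And>e N. 0 < e \<Longrightarrow> \<exists>n\<ge>N. f n \<le> c + e"
  shows "liminf (\<lambda>n. ereal (f n)) \<le> ereal c"
  unfolding liminf_SUP_INF
proof (rule SUP_least)
  fix N
  show "(INF n\<in>{N..}. ereal (f n)) \<le> ereal c"
  proof (rule ereal_le_epsilon2)
    fix e :: real
    assume "0 < e"
    then obtain n where "N \<le> n" "f n \<le> c + e"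
      using assms by blast
    then have "(INF m\<in>{N..}. ereal (f m)) \<le> ereal (f n)"
      by (intro INF_lower) simp
    also have "\<dots> \<le> ereal c + ereal e"
      using \<open>f n \<le> c + e\<close> by simp
    finally show "(INF m\<in>{N..}. ereal (f m)) \<le> ereal c + ereal e" .
  qed
qed

lemma power_one_minus_diff_ge:
  fixes x \<epsilon> :: real
  assumes "0 \<le> x" "x \<le> 1" "0 < \<epsilon>" "N * x \<le> \<epsilon> / 2" "2 / \<epsilon> \<le> T * x"
  shows "1 - \<epsilon> \<le> (1 - x) ^ N - (1 - x) ^ T"
proof -
  have "1 - \<epsilon> / 2 \<le> (1 - x) ^ N"
    using Bernoulli_inequality[of "- x" N] assms(1,2,4) by simp
  moreover have "(1 - x) ^ T \<le> \<epsilon> / 2"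
  proof -
    have "(1 - x) ^ T * (1 + 2 / \<epsilon>) \<le> (1 - x) ^ T * (1 + T * x)"
      using assms(2,5) by (intro mult_left_mono) simp_all
    also have "\<dots> \<le> (1 - x) ^ T * (1 + x) ^ T"
      using Bernoulli_inequality[of x T] assms(1,2) by (intro mult_left_mono) auto
    also have "\<dots> = (1 - x * x) ^ T"
      by (simp add: algebra_simps flip: power_mult_distrib)
    also have "\<dots> \<le> 1"
      using assms(1,2) by (intro power_le_one) (auto simp: mult_le_one)
    finally have "\<epsilon> * (1 - x) ^ T + 2 * (1 - x) ^ T \<le> \<epsilon>"
      using assms(3) by (simp add: field_simps)
    moreover have "0 \<le> \<epsilon> * (1 - x) ^ T"
      using assms(2,3) by simp
    ultimately show ?thesis
      by linarith
  qed
  ultimately show ?thesis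
    by linarith
qed

section \<open>Counting words\<close>

lemma card_lists_nth_in:
  assumes "\<And>k. k < n \<Longrightarrow> finite (A k)"
  shows "card {w. length w = n \<and> (\<forall>k<n. w ! k \<in> A k)} = (\<Prod>k<n. card (A k))"
proof -
  have "bij_betw (\<lambda>w. restrict ((!) w) {..<n}) {w. length w = n \<and> (\<forall>k<n. w ! k \<in> A k)} (PiE {..<n} A)"
    by (rule bij_betw_byWitness[where f' = "\<lambda>f. map f [0..<n]"])
      (auto simp: PiE_def extensional_def fun_eq_iff intro: nth_equalityI)
  then show ?thesis
    by (simp add: bij_betw_same_card card_PiE)
qed

lemma finite_cube: "finite (cube d)"
  and card_cube: "card (cube d) = 2 ^ d"
proof -
  have cube_eq: "cube d = {xs. set xs \<subseteq> {0, 1} \<and> length xs = d}"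
    by (auto simp: cube_def)
  show "finite (cube d)"
    unfolding cube_eq by (simp add: finite_lists_length_eq)
  show "card (cube d) = 2 ^ d"
    unfolding cube_eq by (simp add: card_lists_length_eq numeral_2_eq_2)
qed

lemma finite_Lseq: "finite (Lseq U V d \<omega> k)"
  by (simp add: Lseq_def Let_def I_one_def I_full_def finite_cube)

lemma card_Lseq_pos: "0 < card (Lseq U V d \<omega> k)"
proof -
  have "replicate d 0 \<in> Lseq U V d \<omega> k"
    by (auto simp: Lseq_def Let_def I_one_def I_full_def cube_def)
  then show ?thesis
    using finite_Lseq card_gt_0_iff by blast
qed

lemma card_Lseq_le: "card (Lseq U V d \<omega> k) \<le> 2 ^ d"
  by (simp add: Lseq_def Let_def I_one_def I_full_def card_cube)

lemma blk_start_Suc: "blk_start U V \<omega> (Suc i) = blk_start U V \<omega> i + U (\<omega> i) + V (\<omega> i)"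
  by (simp add: blk_start_def)

lemma blk_start_mono: "i \<le> j \<Longrightarrow> blk_start U V \<omega> i \<le> blk_start U V \<omega> j"
  unfolding blk_start_def by (rule sum_mono2) auto

lemma blk_index_eq:
  assumes "blk_start U V \<omega> i \<le> k" "k < blk_start U V \<omega> (Suc i)"
  shows "blk_index U V \<omega> k = i"
  unfolding blk_index_def
proof (rule Least_equality)
  fix j
  assume "k < blk_start U V \<omega> (Suc j)"
  then show "i \<le> j"
    using assms(1) blk_start_mono[of "Suc j" i U V \<omega>] by (meson not_less_eq_eq order.strict_trans2 not_le)
qed (rule assms(2))

lemma Lseq_eq_I_one:
  assumes "blk_start U V \<omega> i \<le> k" "k < blk_start U V \<omega> i + U (\<omega> i)"
  shows "Lseq U V d \<omega> k = I_one d"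
proof -
  have "blk_index U V \<omega> k = i"
    using assms by (intro blk_index_eq) (auto simp: blk_start_Suc)
  then show ?thesis
    using assms by (simp add: Lseq_def less_diff_conv2)
qed

lemma card_words: "card (words U V d \<omega> n) = (\<Prod>k<n. card (Lseq U V d \<omega> k))"
  unfolding words_def by (rule card_lists_nth_in) (rule finite_Lseq)

lemma card_words_pos: "0 < card (words U V d \<omega> n)"
  unfolding card_words using card_Lseq_pos by (simp add: prod_pos)

lemma card_words_le:
  assumes "n \<le> blk_start U V \<omega> i + U (\<omega> i)"
  shows "card (words U V d \<omega> n) \<le> 2 ^ (d * blk_start U V \<omega> i)"
proof -
  let ?S = "blk_start U V \<omega> i"
  have "card (words U V d \<omega> n) \<le> (\<Prod>k<n. if k < ?S then 2 ^ d else 1)"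
    unfolding card_words
  proof (intro prod_mono conjI)
    fix k
    assume "k \<in> {..<n}"
    then show "card (Lseq U V d \<omega> k) \<le> (if k < ?S then 2 ^ d else 1)"
      using assms card_Lseq_le Lseq_eq_I_one[of U V \<omega> i k d] by (simp add: I_one_def)
  qed simp
  also have "\<dots> = (\<Prod>k\<in>{..<n} \<inter> {..<?S}. 2 ^ d)"
    by (simp add: prod.If_cases lessThan_def)
  also have "\<dots> \<le> (2 ^ d) ^ ?S"
    using card_mono[of "{..<?S}" "{..<n} \<inter> {..<?S}"] by (simp add: power_increasing)
  finally show ?thesis
    by (simp add: power_mult)
qed

section \<open>Large records\<close>

definition large_record :: "(nat \<Rightarrow> nat) \<Rightarrow> nat \<Rightarrow> (nat \<Rightarrow> nat) \<Rightarrow> nat \<Rightarrow> bool" where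
  "large_record U r \<omega> i \<longleftrightarrow> (\<forall>j<i. \<omega> j < \<omega> i) \<and> (Suc r * i) ^ 3 < U (\<omega> i) ^ 2"

lemma sets_large_record_after: "{\<omega>. \<exists>i\<ge>N. large_record U r \<omega> i} \<in> sets Pmeas"
proof -
  have "{\<omega>. \<exists>i\<ge>N. large_record U r \<omega> i} =
        {\<omega>\<in>space (PiM UNIV (\<lambda>_::nat. pw_measure)).
           \<exists>i\<ge>N. \<exists>v. \<omega> i = v \<and> (Suc r * i) ^ 3 < U v ^ 2 \<and> (\<forall>j<i. \<omega> j < v)}"
    by (auto simp: space_PiM large_record_def)
  also have "\<dots> \<in> sets (PiM UNIV (\<lambda>_::nat. pw_measure))"
    by measurable
  finally show ?thesis
    unfolding Pmeas_eq_PiM .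
qed

context
  fixes U V :: "nat \<Rightarrow> nat"
  assumes frame: "is_frame U V"
begin

lemma frame_U_pos: "1 \<le> n \<Longrightarrow> 1 \<le> U n"
  and frame_V_ge: "1 \<le> n \<Longrightarrow> n * U n \<le> V n"
  and frame_step: "1 \<le> n \<Longrightarrow> (U n + V n) ^ 3 \<le> U (Suc n)"
  using frame by (auto simp: is_frame_def)

lemma frame_U_le_block: "1 \<le> n \<Longrightarrow> U n + V n \<le> U (Suc n)"
  using frame_step[of n] self_le_power[of "U n + V n" 3] frame_U_pos[of n] by linarith

lemma frame_U_mono:
  assumes "1 \<le> a" "a \<le> b"
  shows "U a \<le> U b"
  using assms(2)
proof (induction b rule: dec_induct)
  case (step n)
  then show ?case
    using frame_U_le_block[of n] assms(1) by linarith
qed simp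

lemma frame_U_ge:
  assumes "1 \<le> n"
  shows "n \<le> U n"
proof (cases "n = 1")
  case False
  then obtain k where n: "n = Suc k" and k: "1 \<le> k"
    using assms by (cases n) auto
  have "k \<le> k * U k"
    using frame_U_pos[OF k] by simp
  also have "\<dots> \<le> V k"
    by (rule frame_V_ge[OF k])
  finally show ?thesis
    unfolding n using frame_U_le_block[OF k] frame_U_pos[OF k] by linarith
qed (use frame_U_pos in simp)

lemma frame_U_Suc_ge:
  assumes "1 \<le> k"
  shows "k ^ 6 \<le> U (Suc k)"
proof -
  have "k * k \<le> k * U k"
    using frame_U_ge[OF assms] by simp
  also have "\<dots> \<le> V k"
    using frame_V_ge[OF assms] .
  finally have "k * k \<le> V k" .
  then have "(k * k) ^ 3 \<le> (U k + V k) ^ 3"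
    by (intro power_mono) auto
  also have "\<dots> \<le> U (Suc k)"
    using frame_step[OF assms] .
  finally show ?thesis
    by (simp add: power_mult_distrib flip: power_add)
qed

lemma frame_eventually_cube_less_U_squared:
  "\<forall>\<^sub>F m in sequentially. (A * m ^ 2) ^ 3 < U m ^ 2"
  using eventually_ge_at_top[of "Suc (Suc (64 * A ^ 3))"]
proof eventually_elim
  case (elim m)
  then obtain k where m: "m = Suc k" and k: "64 * A ^ 3 < k"
    by (cases m) auto
  have "(A * m ^ 2) ^ 3 = A ^ 3 * m ^ 6"
    by (simp add: power_mult_distrib flip: power_mult)
  also have "\<dots> \<le> A ^ 3 * (2 * k) ^ 6"
    using m k by (intro mult_left_mono power_mono) auto
  also have "\<dots> = 64 * A ^ 3 * k ^ 6"
    by (simp add: power_mult_distrib)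
  also have "\<dots> < k * k ^ 6"
    using k by (intro mult_strict_right_mono) auto
  also have "\<dots> \<le> k ^ 6 * k ^ 6"
    using k by (intro mult_right_mono self_le_power) auto
  also have "\<dots> \<le> U m ^ 2"
  proof -
    have "1 \<le> k"
      using k by linarith
    then have k6: "k ^ 6 \<le> U m"
      unfolding m by (rule frame_U_Suc_ge)
    show ?thesis
      unfolding power2_eq_square by (rule mult_le_mono[OF k6 k6])
  qed
  finally show ?case .
qed

lemma frame_blk_start_ge:
  assumes "\<forall>j<i. 1 \<le> \<omega> j"
  shows "i \<le> blk_start U V \<omega> i"
proof -
  have "(\<Sum>j<i. 1) \<le> (\<Sum>j<i. U (\<omega> j) + V (\<omega> j))"
    using assms frame_U_pos by (intro sum_mono) (simp add: trans_le_add1)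
  then show ?thesis
    by (simp add: blk_start_def)
qed

lemma frame_blk_start_cube_le:
  assumes "\<forall>j<i. 1 \<le> \<omega> j" "\<forall>j<i. \<omega> j < \<omega> i"
  shows "blk_start U V \<omega> i ^ 3 \<le> i ^ 3 * U (\<omega> i)"
proof -
  have "(U (\<omega> j) + V (\<omega> j)) ^ 3 \<le> U (\<omega> i)" if "j < i" for j
  proof -
    have "(U (\<omega> j) + V (\<omega> j)) ^ 3 \<le> U (Suc (\<omega> j))"
      using frame_step assms(1) that by blast
    also have "\<dots> \<le> U (\<omega> i)"
      using frame_U_mono assms that by (simp add: Suc_le_eq)
    finally show ?thesis .
  qed
  then show ?thesis
    unfolding blk_start_def using sum_power_le_card_power_mult[of "{..<i}" 3] by simp
qed

lemma frame_large_record_blk_start_less: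
  assumes "\<forall>j. 1 \<le> \<omega> j" "large_record U r \<omega> i"
  shows "Suc r * blk_start U V \<omega> i < U (\<omega> i)"
proof -
  define Y where "Y = U (\<omega> i)"
  have "0 < Y"
    using frame_U_pos assms(1) by (simp add: Y_def Suc_le_eq)
  have "(Suc r * blk_start U V \<omega> i) ^ 3 = Suc r ^ 3 * blk_start U V \<omega> i ^ 3"
    by (rule power_mult_distrib)
  also have "\<dots> \<le> Suc r ^ 3 * (i ^ 3 * Y)"
    using frame_blk_start_cube_le[of i \<omega>] assms unfolding large_record_def Y_def by simp
  also have "\<dots> = (Suc r * i) ^ 3 * Y"
    by (simp only: power_mult_distrib mult.assoc)
  also have "\<dots> < Y ^ 2 * Y"
    using assms(2) \<open>0 < Y\<close> unfolding large_record_def Y_def by simp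
  also have "\<dots> = Y ^ 3"
    by (simp add: power2_eq_square power3_eq_cube)
  finally show ?thesis
    unfolding Y_def by (rule power_less_imp_less_base) simp
qed

lemma frame_first_hit_large_record:
  assumes "(Suc r * T) ^ 3 < U m ^ 2" "1 \<le> m" "i < T" "m \<le> \<omega> i" "\<forall>j<i. \<omega> j < m"
  shows "large_record U r \<omega> i"
proof -
  have "(Suc r * i) ^ 3 \<le> (Suc r * T) ^ 3"
    using assms(3) by (intro power_mono mult_le_mono2) auto
  also have "\<dots> < U m ^ 2"
    by (rule assms(1))
  also have "\<dots> \<le> U (\<omega> i) ^ 2"
    using assms(2,4) by (intro power_mono frame_U_mono) auto
  finally show ?thesis
    using assms(4,5) unfolding large_record_def by fastforce
qed

lemma frame_liminf_le_if_large_records: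
  assumes pos: "\<forall>j. 1 \<le> \<omega> j" and records: "\<forall>r N. \<exists>i\<ge>N. large_record U r \<omega> i"
  shows "liminf (\<lambda>n. ereal (ln (\<Sum>w\<in>words U V d \<omega> n. 2 powr (- real n * t)) / real n))
           \<le> ereal (- t * ln 2)"
proof (rule liminf_le_if_frequently_le)
  fix e :: real and N :: nat
  assume "0 < e"
  obtain r where "real d * ln 2 / e < real r"
    using reals_Archimedean2 by blast
  then have r: "real d * ln 2 / real (Suc r) \<le> e"
    using \<open>0 < e\<close> by (simp add: field_simps)
  obtain i where "N \<le> i" and i: "large_record U r \<omega> i"
    using records by blast
  define n where "n = blk_start U V \<omega> i + U (\<omega> i)"
  have less: "Suc r * blk_start U V \<omega> i < U (\<omega> i)"
    using frame_large_record_blk_start_less[OF pos i] .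
  have "N \<le> n"
    using \<open>N \<le> i\<close> frame_blk_start_ge[of i \<omega>] pos by (simp add: n_def)
  moreover have "ln (\<Sum>w\<in>words U V d \<omega> n. 2 powr (- real n * t)) / real n
                   \<le> real d * ln 2 / real (Suc r) - t * ln 2"
    using less
    by (intro ln_sum_const_div_le[where S = "blk_start U V \<omega> i"] card_words_pos card_words_le)
      (simp_all add: n_def)
  ultimately show "\<exists>n\<ge>N. ln (\<Sum>w\<in>words U V d \<omega> n. 2 powr (- real n * t)) / real n \<le> - t * ln 2 + e"
    using r by (intro exI[of _ n]) auto
qed

lemma frame_prob_large_record_after_ge:
  assumes "0 < \<epsilon>"
  shows "1 - \<epsilon> \<le> measure Pmeas {\<omega>. \<exists>i\<ge>N. large_record U r \<omega> i}"
proof -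
  define K where "K = nat \<lceil>2 * Cconst / \<epsilon>\<rceil> + N"
  have "(\<lambda>m. real N * measure pw_measure {m..}) \<longlonglongrightarrow> 0"
    using tendsto_mult_right_zero[OF measure_atLeast_tendsto_0[OF pw.finite_measure sets_pw_measure]] .
  then have "\<forall>\<^sub>F m in sequentially. real N * measure pw_measure {m..} < \<epsilon> / 2"
    by (rule order_tendstoD(2)) (use assms in simp)
  moreover have "\<forall>\<^sub>F m in sequentially. (Suc r * K * m ^ 2) ^ 3 < U m ^ 2"
    by (rule frame_eventually_cube_less_U_squared)
  moreover have "\<forall>\<^sub>F m in sequentially. 1 \<le> m"
    by (rule eventually_ge_at_top)
  ultimately have "\<forall>\<^sub>F m in sequentially. real N * measure pw_measure {m..} < \<epsilon> / 2 \<and>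
                     (Suc r * K * m ^ 2) ^ 3 < U m ^ 2 \<and> 1 \<le> m"
    by eventually_elim simp
  then obtain m where small: "real N * measure pw_measure {m..} < \<epsilon> / 2"
    and large: "(Suc r * K * m ^ 2) ^ 3 < U m ^ 2" and "1 \<le> m"
    unfolding eventually_sequentially by blast
  define x where "x = measure pw_measure {m..}"
  define T where "T = K * m ^ 2"
  have large_T: "(Suc r * T) ^ 3 < U m ^ 2"
    using large unfolding T_def by (simp only: mult.assoc)
  have "N \<le> K"
    by (simp add: K_def)
  also have "K \<le> T"
    unfolding T_def using \<open>1 \<le> m\<close> by (simp add: one_le_power)
  finally have "N \<le> T" .
  have "2 / \<epsilon> \<le> T * x"
  proof -
    have "2 * Cconst / \<epsilon> \<le> K"
      using real_nat_ceiling_ge[of "2 * Cconst / \<epsilon>"] by (simp add: K_def)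
    then have "2 / \<epsilon> \<le> K / Cconst"
      using assms Cconst_pos by (simp add: field_simps)
    also have "\<dots> = T * (1 / (Cconst * real m ^ 2))"
      using \<open>1 \<le> m\<close> by (simp add: T_def)
    also have "\<dots> \<le> T * x"
      unfolding x_def using measure_pw_measure_atLeast_ge[OF \<open>1 \<le> m\<close>] by (rule mult_left_mono) simp
    finally show ?thesis .
  qed
  then have "1 - \<epsilon> \<le> (1 - x) ^ N - (1 - x) ^ T"
    using assms small by (intro power_one_minus_diff_ge) (simp_all add: x_def)
  also have "\<dots> = measure Pmeas {\<omega>. \<exists>i. N \<le> i \<and> i < T \<and> \<omega> i \<in> {m..} \<and> (\<forall>j<i. \<omega> j \<notin> {m..})}"
    using measure_PiM_first_hit_between[OF prob_space_pw_measure, of "{m..}" N T] \<open>N \<le> T\<close>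
    by (simp add: x_def flip: Pmeas_eq_PiM)
  also have "\<dots> \<le> measure Pmeas {\<omega>. \<exists>i\<ge>N. large_record U r \<omega> i}"
    using frame_first_hit_large_record[OF large_T \<open>1 \<le> m\<close>]
    by (intro Pmeas.finite_measure_mono sets_large_record_after) (auto simp: not_le)
  finally show ?thesis .
qed

lemma frame_AE_large_record_after: "AE \<omega> in Pmeas. \<exists>i\<ge>N. large_record U r \<omega> i"
proof -
  let ?B = "{\<omega>. \<exists>i\<ge>N. large_record U r \<omega> i}"
  have "1 \<le> measure Pmeas ?B"
  proof (rule field_le_epsilon)
    fix e :: real
    assume "0 < e"
    then show "1 \<le> measure Pmeas ?B + e"
      using frame_prob_large_record_after_ge[of e N r] by linarith
  qed
  then have "measure Pmeas ?B = 1"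
    using Pmeas.prob_le_1[of ?B] by linarith
  from Pmeas.AE_prob_1[OF this] show ?thesis
    by simp
qed

end

theorem mainTheorem3:
  fixes U V :: "nat \<Rightarrow> nat" and d :: nat
  assumes "d \<ge> 1" and "is_frame U V"
  shows "AE \<omega> in Pmeas. \<forall>t::real. t \<ge> 0 \<longrightarrow>
           liminf (\<lambda>n. ereal (ln (\<Sum>w\<in>words U V d \<omega> n. 2 powr (- real n * t)) / real n))
             \<le> ereal (- t * ln 2)"
proof -
  have "AE \<omega> in Pmeas. \<forall>r N. \<exists>i\<ge>N. large_record U r \<omega> i"
    using frame_AE_large_record_after[OF assms(2)] by (simp add: AE_all_countable)
  with AE_Pmeas_pos show ?thesis
  proof eventually_elim
    case (elim \<omega>)
    show ?case
      using frame_liminf_le_if_large_records[OF assms(2) elim] by simp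
  qed
qed

end
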